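(* Let $d_1,d_2\ge1$. Consider the gate $\Gamma_C$ with vertices $v_{i,j}$ ($i\in[d_1]$, $j\in[d_2]$), each with signature $\mathtt{PASS}$ (incident edges ordered north, east, south, west), where $v_{i,j}$'s east edge is $v_{i,j+1}$'s west edge and $v_{i,j}$'s south edge is $v_{i+1,j}$'s north edge; its dangling edges form four groups $x_1=(x_{1,1},\dots,x_{1,d_1})$, $x_2=(x_{2,1},\dots,x_{2,d_2})$, $y_1\in\{0,1\}^{d_1}$, $y_2\in\{0,1\}^{d_2}$, where $x_{1,i}$ is the west edge of $v_{i,1}$, the east edge of $v_{i,d_2}$ is the $(d_1+1-i)$-th edge of $y_1$, $x_{2,j}$ is the north edge of $v_{1,j}$, and the south edge of $v_{d_1,j}$ is the $(d_2+1-j)$-th edge of $y_2$. Then $$\mathrm{Sig}(\Gamma_C)(x_1,x_2,y_1,y_2)=C(x_1,x_2,y_1,y_2):=(-1)^{\mathtt{ODD}(x_1)\mathtt{ODD}(x_2)}[y_1=x_1^{-1}][y_2=x_2^{-1}],$$ and the grid cap function $O(x_1,x_2,y_1,y_2):=[y_1=x_1^{-1}][y_2=x_2^{-1}]$ satisfies, for all arguments, $$O=\tfrac12\big(1+(-1)^{\mathtt{ODD}(x_1)}+(-1)^{\mathtt{ODD}(x_2)}-(-1)^{\mathtt{ODD}(x_1)+\mathtt{ODD}(x_2)}\big)\cdot C.$$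
   Context: $\mathtt{PASS}(1111)=-1$, $\mathtt{PASS}(0000)=\mathtt{PASS}(0101)=\mathtt{PASS}(1010)=1$, $\mathtt{PASS}=0$ otherwise (bits ordered north, east, south, west). $\mathtt{ODD}(x)$ is the Hamming weight of $x$ mod $2$. For a string $x=x_1\cdots x_d$, $x^{-1}=x_d\cdots x_1$ is its reversal. $[\varphi]$ is $1$ if $\varphi$ holds and $0$ otherwise. The signature of a gate $\Gamma$ with dangling edge set $D$ is $\mathrm{Sig}(\Gamma,x)=\sum_{y\in\{0,1\}^{E(\Gamma)\setminus D}}w_\Gamma(xy)\prod_v f_v((xy)|_{I(v)})$, with $w_\Gamma(z)$ the product of the weights of active edges (here all weights are $1$). *)

theory Defs
  imports Main "HOL-Library.FuncSet" Complex_Main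
begin

text \<open>Bits are booleans (True = 1). Signature PASS with arguments ordered north, east, south, west.\<close>
definition PASS :: "bool \<Rightarrow> bool \<Rightarrow> bool \<Rightarrow> bool \<Rightarrow> real" where
  "PASS n e s w =
     (if n \<and> e \<and> s \<and> w then -1
      else if (\<not>n \<and> \<not>e \<and> \<not>s \<and> \<not>w) \<or> (\<not>n \<and> e \<and> \<not>s \<and> w) \<or> (n \<and> \<not>e \<and> s \<and> \<not>w) then 1
      else 0)"

definition ODD :: "bool list \<Rightarrow> nat" where
  "ODD xs = length (filter id xs) mod 2"

definition iverson :: "bool \<Rightarrow> real" where
  "iverson P = (if P then 1 else 0)"

text \<open>Value of the horizontal edge between columns j and j+1 in row i (1 \<le> i \<le> d1, 0 \<le> j \<le> d2):
  column 0 side is the west dangling edge x1_i, column d2 side is the east dangling edge,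
  which is the (d1+1-i)-th entry of y1; otherwise the internal edge variable H(i,j).\<close>
definition hor_edge :: "nat \<Rightarrow> nat \<Rightarrow> bool list \<Rightarrow> bool list \<Rightarrow> (nat \<times> nat \<Rightarrow> bool) \<Rightarrow> nat \<Rightarrow> nat \<Rightarrow> bool" where
  "hor_edge d1 d2 x1 y1 H i j =
     (if j = 0 then x1 ! (i - 1) else if j = d2 then y1 ! (d1 - i) else H (i, j))"

text \<open>Value of the vertical edge between rows i and i+1 in column j (0 \<le> i \<le> d1, 1 \<le> j \<le> d2).\<close>
definition ver_edge :: "nat \<Rightarrow> nat \<Rightarrow> bool list \<Rightarrow> bool list \<Rightarrow> (nat \<times> nat \<Rightarrow> bool) \<Rightarrow> nat \<Rightarrow> nat \<Rightarrow> bool" where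
  "ver_edge d1 d2 x2 y2 V i j =
     (if i = 0 then x2 ! (j - 1) else if i = d1 then y2 ! (d2 - j) else V (i, j))"

definition Sig_grid :: "nat \<Rightarrow> nat \<Rightarrow> bool list \<Rightarrow> bool list \<Rightarrow> bool list \<Rightarrow> bool list \<Rightarrow> real" where
  "Sig_grid d1 d2 x1 x2 y1 y2 =
     (\<Sum>(H, V) \<in> (({1..d1} \<times> {1..<d2}) \<rightarrow>\<^sub>E (UNIV :: bool set)) \<times> (({1..<d1} \<times> {1..d2}) \<rightarrow>\<^sub>E (UNIV :: bool set)).
        \<Prod>(i, j) \<in> {1..d1} \<times> {1..d2}.
          PASS (ver_edge d1 d2 x2 y2 V (i - 1) j)
               (hor_edge d1 d2 x1 y1 H i j)
               (ver_edge d1 d2 x2 y2 V i j)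
               (hor_edge d1 d2 x1 y1 H i (j - 1)))"

definition C_fun :: "bool list \<Rightarrow> bool list \<Rightarrow> bool list \<Rightarrow> bool list \<Rightarrow> real" where
  "C_fun x1 x2 y1 y2 = (-1) ^ (ODD x1 * ODD x2) * iverson (y1 = rev x1) * iverson (y2 = rev x2)"

definition O_fun :: "bool list \<Rightarrow> bool list \<Rightarrow> bool list \<Rightarrow> bool list \<Rightarrow> real" where
  "O_fun x1 x2 y1 y2 = iverson (y1 = rev x1) * iverson (y2 = rev x2)"

end

theory Submission
  imports Defs
begin

text \<open>A nonzero value of \<open>PASS\<close> forces every signal to pass straight through its vertex
  (north equals south, east equals west). Hence the only edge assignment of the grid with nonzero
  weight carries the \<open>i\<close>-th bit of \<open>x1\<close> along row \<open>i\<close> and the \<open>j\<close>-th bit of \<open>x2\<close> down column \<open>j\<close>;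
  it meets the dangling edges exactly when \<open>y1 = rev x1\<close> and \<open>y2 = rev x2\<close>. Each vertex where
  two 1-signals cross contributes \<open>-1\<close>, so the weight is \<open>(-1)^(|x1| * |x2|)\<close>.\<close>

lemma PASS_nonzero_imp: "PASS n e s w \<noteq> 0 \<Longrightarrow> n = s \<and> e = w"
  by (auto simp: PASS_def split: if_splits)

lemma PASS_straight: "PASS v h v h = (if v \<and> h then -1 else 1)"
  by (auto simp: PASS_def)

lemma eq_zero_if_eq_pred:
  fixes f :: "nat \<Rightarrow> 'a"
  assumes "\<And>k. 1 \<le> k \<Longrightarrow> k \<le> d \<Longrightarrow> f k = f (k - 1)" and "j \<le> d"
  shows "f j = f 0"
  using assms(2)
proof (induction j)
  case (Suc j)
  then show ?case using assms(1)[of "Suc j"] by simp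
qed simp

lemma prod_if_nth_eq_power_count:
  fixes a :: "'a :: comm_monoid_mult"
  shows "(\<Prod>k\<in>{1..length xs}. if xs ! (k - 1) then a else 1) = a ^ length (filter id xs)"
proof (induction xs rule: rev_induct)
  case (snoc x xs)
  have "(\<Prod>k\<in>{1..length xs}. if (xs @ [x]) ! (k - 1) then a else 1) =
        (\<Prod>k\<in>{1..length xs}. if xs ! (k - 1) then a else 1)"
    by (rule prod.cong) (auto simp: nth_append)
  then show ?case using snoc by (simp add: nth_append mult.commute)
qed simp

lemma ODD_cases: "ODD xs = 0 \<or> ODD xs = 1"
  by (auto simp: ODD_def)

lemma minus_one_power_count_mult:
  "(-1 :: real) ^ (length (filter id xs) * length (filter id ys)) = (-1) ^ (ODD xs * ODD ys)"
  by (simp add: ODD_def minus_one_power_iff)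

definition grid_weight ::
  "nat \<Rightarrow> nat \<Rightarrow> bool list \<Rightarrow> bool list \<Rightarrow> bool list \<Rightarrow> bool list \<Rightarrow>
   (nat \<times> nat \<Rightarrow> bool) \<Rightarrow> (nat \<times> nat \<Rightarrow> bool) \<Rightarrow> real" where
  "grid_weight d1 d2 x1 x2 y1 y2 H V =
     (\<Prod>(i, j) \<in> {1..d1} \<times> {1..d2}.
        PASS (ver_edge d1 d2 x2 y2 V (i - 1) j) (hor_edge d1 d2 x1 y1 H i j)
             (ver_edge d1 d2 x2 y2 V i j) (hor_edge d1 d2 x1 y1 H i (j - 1)))"

definition straight_hor :: "nat \<Rightarrow> nat \<Rightarrow> bool list \<Rightarrow> nat \<times> nat \<Rightarrow> bool" where
  "straight_hor d1 d2 x1 = (\<lambda>(i, j)\<in>{1..d1} \<times> {1..<d2}. x1 ! (i - 1))"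

definition straight_ver :: "nat \<Rightarrow> nat \<Rightarrow> bool list \<Rightarrow> nat \<times> nat \<Rightarrow> bool" where
  "straight_ver d1 d2 x2 = (\<lambda>(i, j)\<in>{1..<d1} \<times> {1..d2}. x2 ! (j - 1))"

lemma Sig_grid_eq_sum_grid_weight:
  "Sig_grid d1 d2 x1 x2 y1 y2 =
     (\<Sum>(H, V) \<in> (({1..d1} \<times> {1..<d2}) \<rightarrow>\<^sub>E UNIV) \<times> (({1..<d1} \<times> {1..d2}) \<rightarrow>\<^sub>E UNIV).
        grid_weight d1 d2 x1 x2 y1 y2 H V)"
  by (simp add: Sig_grid_def grid_weight_def)

lemma grid_weight_nonzero_edges:
  assumes "grid_weight d1 d2 x1 x2 y1 y2 H V \<noteq> 0"
  shows grid_weight_nonzero_hor_edge: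
      "i \<in> {1..d1} \<Longrightarrow> j \<le> d2 \<Longrightarrow> hor_edge d1 d2 x1 y1 H i j = x1 ! (i - 1)"
    and grid_weight_nonzero_ver_edge:
      "j \<in> {1..d2} \<Longrightarrow> i \<le> d1 \<Longrightarrow> ver_edge d1 d2 x2 y2 V i j = x2 ! (j - 1)"
proof -
  have pass_through:
    "ver_edge d1 d2 x2 y2 V (i - 1) j = ver_edge d1 d2 x2 y2 V i j \<and>
     hor_edge d1 d2 x1 y1 H i j = hor_edge d1 d2 x1 y1 H i (j - 1)"
    if "i \<in> {1..d1}" "j \<in> {1..d2}" for i j
  proof -
    have "PASS (ver_edge d1 d2 x2 y2 V (i - 1) j) (hor_edge d1 d2 x1 y1 H i j)
               (ver_edge d1 d2 x2 y2 V i j) (hor_edge d1 d2 x1 y1 H i (j - 1)) \<noteq> 0"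
      using assms that by (auto simp: grid_weight_def)
    then show ?thesis by (rule PASS_nonzero_imp)
  qed
  show "hor_edge d1 d2 x1 y1 H i j = x1 ! (i - 1)" if "i \<in> {1..d1}" "j \<le> d2"
  proof -
    have "hor_edge d1 d2 x1 y1 H i j = hor_edge d1 d2 x1 y1 H i 0"
      by (rule eq_zero_if_eq_pred[where d = d2]) (use pass_through that in auto)
    then show ?thesis by (simp add: hor_edge_def)
  qed
  show "ver_edge d1 d2 x2 y2 V i j = x2 ! (j - 1)" if "j \<in> {1..d2}" "i \<le> d1"
  proof -
    have "ver_edge d1 d2 x2 y2 V i j = ver_edge d1 d2 x2 y2 V 0 j"
      by (rule eq_zero_if_eq_pred[where d = d1]) (use pass_through that in auto)
    then show ?thesis by (simp add: ver_edge_def)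
  qed
qed

lemma grid_weight_nonzero_imp:
  assumes "d1 \<ge> 1" "d2 \<ge> 1"
    and "length x1 = d1" "length y1 = d1" "length x2 = d2" "length y2 = d2"
    and H: "H \<in> ({1..d1} \<times> {1..<d2}) \<rightarrow>\<^sub>E UNIV" and V: "V \<in> ({1..<d1} \<times> {1..d2}) \<rightarrow>\<^sub>E UNIV"
    and nonzero: "grid_weight d1 d2 x1 x2 y1 y2 H V \<noteq> 0"
  shows "H = straight_hor d1 d2 x1 \<and> V = straight_ver d1 d2 x2 \<and> y1 = rev x1 \<and> y2 = rev x2"
proof (intro conjI)
  note hor = grid_weight_nonzero_hor_edge[OF nonzero]
  note ver = grid_weight_nonzero_ver_edge[OF nonzero]
  have "H = (\<lambda>p\<in>{1..d1} \<times> {1..<d2}. H p)" using H by simp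
  also have "\<dots> = straight_hor d1 d2 x1"
    unfolding straight_hor_def
  proof (rule restrict_ext)
    fix p assume "p \<in> {1..d1} \<times> {1..<d2}"
    then show "H p = (case p of (i, j) \<Rightarrow> x1 ! (i - 1))"
      using hor[of "fst p" "snd p"] by (cases p) (simp add: hor_edge_def)
  qed
  finally show "H = straight_hor d1 d2 x1" .
  have "V = (\<lambda>p\<in>{1..<d1} \<times> {1..d2}. V p)" using V by simp
  also have "\<dots> = straight_ver d1 d2 x2"
    unfolding straight_ver_def
  proof (rule restrict_ext)
    fix p assume "p \<in> {1..<d1} \<times> {1..d2}"
    then show "V p = (case p of (i, j) \<Rightarrow> x2 ! (j - 1))"
      using ver[of "snd p" "fst p"] by (cases p) (simp add: ver_edge_def)
  qed
  finally show "V = straight_ver d1 d2 x2" .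
  show "y1 = rev x1"
  proof (rule nth_equalityI)
    fix k assume "k < length y1"
    then show "y1 ! k = rev x1 ! k"
      using hor[of "d1 - k" d2] assms(1-4) by (simp add: hor_edge_def rev_nth)
  qed (simp add: assms)
  show "y2 = rev x2"
  proof (rule nth_equalityI)
    fix k assume "k < length y2"
    then show "y2 ! k = rev x2 ! k"
      using ver[of "d2 - k" d1] assms by (simp add: ver_edge_def rev_nth)
  qed (simp add: assms)
qed

lemma grid_weight_straight:
  assumes "length x1 = d1" "length x2 = d2" "y1 = rev x1" "y2 = rev x2"
  shows "grid_weight d1 d2 x1 x2 y1 y2 (straight_hor d1 d2 x1) (straight_ver d1 d2 x2) =
           (-1) ^ (ODD x1 * ODD x2)"
proof -
  have "grid_weight d1 d2 x1 x2 y1 y2 (straight_hor d1 d2 x1) (straight_ver d1 d2 x2) =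
        (\<Prod>(i, j) \<in> {1..d1} \<times> {1..d2}. if x1 ! (i - 1) then if x2 ! (j - 1) then -1 else 1 else 1)"
    unfolding grid_weight_def
  proof (intro prod.cong refl, clarify)
    fix i j assume ij: "i \<in> {1..d1}" "j \<in> {1..d2}"
    have "hor_edge d1 d2 x1 y1 (straight_hor d1 d2 x1) i j = x1 ! (i - 1)"
      "hor_edge d1 d2 x1 y1 (straight_hor d1 d2 x1) i (j - 1) = x1 ! (i - 1)"
      "ver_edge d1 d2 x2 y2 (straight_ver d1 d2 x2) i j = x2 ! (j - 1)"
      "ver_edge d1 d2 x2 y2 (straight_ver d1 d2 x2) (i - 1) j = x2 ! (j - 1)"
      using ij assms by (auto simp: hor_edge_def ver_edge_def straight_hor_def straight_ver_def rev_nth)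
    then show "PASS (ver_edge d1 d2 x2 y2 (straight_ver d1 d2 x2) (i - 1) j)
        (hor_edge d1 d2 x1 y1 (straight_hor d1 d2 x1) i j) (ver_edge d1 d2 x2 y2 (straight_ver d1 d2 x2) i j)
        (hor_edge d1 d2 x1 y1 (straight_hor d1 d2 x1) i (j - 1)) =
      (if x1 ! (i - 1) then if x2 ! (j - 1) then -1 else 1 else 1)"
      by (simp add: PASS_straight)
  qed
  also have "\<dots> = (\<Prod>i\<in>{1..d1}. \<Prod>j\<in>{1..d2}. if x1 ! (i - 1) then if x2 ! (j - 1) then -1 else 1 else 1)"
    by (rule prod.cartesian_product[symmetric])
  also have "\<dots> = (\<Prod>i\<in>{1..d1}. if x1 ! (i - 1) then (-1) ^ length (filter id x2) else 1)"
    using prod_if_nth_eq_power_count[of x2 "-1 :: real"] assms by (auto intro!: prod.cong)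
  also have "\<dots> = (-1) ^ (length (filter id x2) * length (filter id x1))"
    using prod_if_nth_eq_power_count[of x1] assms by (simp add: power_mult)
  finally show ?thesis by (simp add: minus_one_power_count_mult mult.commute)
qed

lemma Sig_grid_eq_C_fun:
  assumes "d1 \<ge> 1" "d2 \<ge> 1"
    and "length x1 = d1" "length y1 = d1" "length x2 = d2" "length y2 = d2"
  shows "Sig_grid d1 d2 x1 x2 y1 y2 = C_fun x1 x2 y1 y2"
proof -
  define D where "D = (({1..d1} \<times> {1..<d2}) \<rightarrow>\<^sub>E (UNIV :: bool set)) \<times>
                      (({1..<d1} \<times> {1..d2}) \<rightarrow>\<^sub>E (UNIV :: bool set))"
  define S where "S = (straight_hor d1 d2 x1, straight_ver d1 d2 x2)"
  let ?w = "\<lambda>(H, V). grid_weight d1 d2 x1 x2 y1 y2 H V"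
  have vanish: "?w p = 0" if "p \<in> D" "p \<noteq> S \<or> y1 \<noteq> rev x1 \<or> y2 \<noteq> rev x2" for p
    using that grid_weight_nonzero_imp[OF assms] by (auto simp: D_def S_def)
  show ?thesis
  proof (cases "y1 = rev x1 \<and> y2 = rev x2")
    case True
    have "S \<in> D" by (auto simp: D_def S_def straight_hor_def straight_ver_def)
    moreover have "finite D" by (auto simp: D_def intro!: finite_PiE)
    ultimately have "sum ?w D = ?w S"
      using vanish by (intro sum.mono_neutral_right[of D "{S}", simplified]) auto
    then show ?thesis
      using True assms grid_weight_straight[of x1 d1 x2 d2 y1 y2]
      by (simp add: Sig_grid_eq_sum_grid_weight D_def S_def C_fun_def iverson_def)
  next
    case False
    then have "sum ?w D = 0" using vanish by (intro sum.neutral) auto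
    then show ?thesis
      using False by (simp add: Sig_grid_eq_sum_grid_weight D_def C_fun_def iverson_def)
  qed
qed

lemma O_fun_eq_parity_factor_C_fun:
  "O_fun a1 a2 b1 b2 =
     (1/2) * (1 + (-1) ^ ODD a1 + (-1) ^ ODD a2 - (-1) ^ (ODD a1 + ODD a2)) * C_fun a1 a2 b1 b2"
  using ODD_cases[of a1] ODD_cases[of a2] by (auto simp: O_fun_def C_fun_def iverson_def)

theorem mainTheorem9:
  fixes d1 d2 :: nat and x1 x2 y1 y2 :: "bool list"
  assumes "d1 \<ge> 1" and "d2 \<ge> 1"
    and "length x1 = d1" and "length y1 = d1" and "length x2 = d2" and "length y2 = d2"
  shows "Sig_grid d1 d2 x1 x2 y1 y2 = C_fun x1 x2 y1 y2 \<and>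
    (\<forall>a1 a2 b1 b2. length a1 = d1 \<longrightarrow> length b1 = d1 \<longrightarrow> length a2 = d2 \<longrightarrow> length b2 = d2 \<longrightarrow>
       O_fun a1 a2 b1 b2 =
         (1/2) * (1 + (-1) ^ ODD a1 + (-1) ^ ODD a2 - (-1) ^ (ODD a1 + ODD a2)) * C_fun a1 a2 b1 b2)"
  using Sig_grid_eq_C_fun[OF assms] O_fun_eq_parity_factor_C_fun by blast

end
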